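(* In the setting of the standard presentation of $\mathbb{A}_{\Gamma,u,k}$, let $w\in W$ be adjacent to $u$ with $e=\{u,w\}$, $m_e=2\ell_e$, and assume $\ell_e\equiv 0\pmod k$. Let $M_{B(w,u)}$ be the $k\times(k+1)$ matrix of Fox derivatives, evaluated in $\Lambda=\mathbb{C}[H_1(\mathbb{A}_{\Gamma,u,k})]$, of the $k$ relations (RB) for $w$ with respect to $w_0,\dots,w_{k-1},\bar u$. Let $\mathfrak p\subset\Lambda$ be the ideal generated by $1-t_{\bar u}t_{w,0}t_{w,1}\cdots t_{w,k-1}$, where $t_{\bar u},t_{w,i}$ are the homology classes of $\bar u,w_i$. Then $M_{B(w,u)}\otimes\Lambda/\mathfrak p$ has rank $1$.
   Context: Setting: $\Gamma=(V,E,m)$ finite simple graph with even labels $m_e=2\ell_e$; $\mathbb{A}_\Gamma=\langle V\mid (xy)^{\ell_e}=(yx)^{\ell_e},\ \{x,y\}\in E\rangle$. For $u\in V$, $k\ge2$, $\mathbb{A}_{\Gamma,u,k}=\ker(\mathbb{A}_\Gamma\to\mathbb{Z}_k,\ u\mapsto1,\ v\mapsto0\ (v\ne u))$. $V_{2,u}$ = vertices joined to $u$ by an edge of label 2, $W=V\setminus(\{u\}\cup V_{2,u})$. Standard presentation generators: $\bar u=u^k$, $v\in V_{2,u}$, $w_i=u^iwu^{-i}$ ($w\in W$, $0\le i<k$). The relations (RB) for $w\in W$ adjacent to $u$: for $0\le i<k$, $W_i\cdots W_{i+\ell_e-1}=W_{i+1}\cdots W_{i+\ell_e}$ with $W_j=\bar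 u^qw_s\bar u^{-q}$ for $j=qk+s$, $0\le s<k$. $H_1(\mathbb{A}_{\Gamma,u,k})$ is free abelian and when $k\mid\ell_e$ the classes $t_{\bar u},t_{w,0},\dots,t_{w,k-1}$ are independent; $\mathfrak p$ is prime and rank over $\Lambda/\mathfrak p$ means rank over its fraction field. Fox derivatives of $A=B$ are those of $AB^{-1}$. *)

theory Defs
  imports "Jordan_Normal_Form.DL_Submatrix" "Jordan_Normal_Form.Determinant"
    "HOL-Library.Poly_Mapping" "HOL-Library.Function_Algebras"
begin

text \<open>Free generators relevant for the relations (RB) of a vertex w:
  WGen s stands for w_s (0 \<le> s < k) and UBar stands for \<bar>u = u^k.\<close>
datatype gen = WGen nat | UBar

text \<open>Words in the free group: letters (g, True) = g, (g, False) = g^{-1}.\<close>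
type_synonym word = "(gen \<times> bool) list"

definition word_inv :: "word \<Rightarrow> word" where
  "word_inv xs = rev (map (\<lambda>(g, b). (g, \<not> b)) xs)"

definition Wletter :: "nat \<Rightarrow> nat \<Rightarrow> word" where
  "Wletter k j = replicate (j div k) (UBar, True) @ [(WGen (j mod k), True)]
                 @ replicate (j div k) (UBar, False)"

text \<open>Relation (RB) number i, written as A B^{-1} for the relation A = B
  with A = W_i \<dots> W_{i+l-1}, B = W_{i+1} \<dots> W_{i+l}.\<close>
definition RB_word :: "nat \<Rightarrow> nat \<Rightarrow> nat \<Rightarrow> word" where
  "RB_word k l i = concat (map (Wletter k) [i..<i+l])
                   @ word_inv (concat (map (Wletter k) [i+1..<i+l+1]))"

text \<open>Group algebra C[H] of an abelian group H; the monomial of h \<in> H.\<close>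
definition mono :: "'h::monoid_add \<Rightarrow> ('h \<Rightarrow>\<^sub>0 complex)" where
  "mono h = Poly_Mapping.single h 1"

text \<open>Fox derivative d/dy of a word, followed by the ring map
  Z[F] \<rightarrow> C[H] induced by the abelianization phi : generators \<rightarrow> H.\<close>
fun fox :: "(gen \<Rightarrow> 'h::ab_group_add) \<Rightarrow> gen \<Rightarrow> word \<Rightarrow> ('h \<Rightarrow>\<^sub>0 complex)" where
  "fox \<phi> y [] = 0"
| "fox \<phi> y ((g, True) # xs) =
     (if g = y then 1 else 0) + mono (\<phi> g) * fox \<phi> y xs"
| "fox \<phi> y ((g, False) # xs) =
     (if g = y then - mono (- \<phi> g) else 0) + mono (- \<phi> g) * fox \<phi> y xs"

text \<open>The k x (k+1) Fox matrix M_{B(w,u)}: rows = relations (RB) i = 0..k-1,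
  columns = w_0, ..., w_{k-1}, \<bar>u.\<close>
definition fox_matrix_RB ::
  "(gen \<Rightarrow> 'h::ab_group_add) \<Rightarrow> nat \<Rightarrow> nat \<Rightarrow> ('h \<Rightarrow>\<^sub>0 complex) mat" where
  "fox_matrix_RB \<phi> k l = mat k (k + 1)
     (\<lambda>(i, j). fox \<phi> (if j < k then WGen j else UBar) (RB_word k l i))"

text \<open>Rank of a matrix A over (the fraction field of) R/P, for a prime ideal P of
  the commutative ring R: the largest size of a square minor of A not lying in P
  (determinantal rank of the reduction of A modulo P).\<close>
definition rank_mod :: "'a::comm_ring_1 set \<Rightarrow> 'a mat \<Rightarrow> nat" where
  "rank_mod P A = Max {r. \<exists>I J. I \<subseteq> {..<dim_row A} \<and> J \<subseteq> {..<dim_col A} \<and>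
        card I = r \<and> card J = r \<and> det (submatrix A I J) \<notin> P}"

end

theory Submission
  imports Defs
begin

text \<open>
  Write l = q k and B_i = W_i ... W_(i+l-1) ubar^q, so that relation (RB) number i says
  B_i = B_(i+1) up to free reduction. As k divides l, every B_i has the same abelianization
  t^q, where t = t_ubar t_(w,0) ... t_(w,k-1); hence row i of the Fox matrix is
  dB_i - dB_(i+1). Since W_(i+l) = ubar^q w_i ubar^(-q), the words B_i w_i and w_i B_(i+1)
  are equal in the free group, which gives dB_(i+1) = t_(w,i)^(-1) dB_i modulo 1 - t^q,
  hence modulo 1 - t. So modulo 1 - t the Fox matrix is an outer product and all its
  minors of size at least 2 lie in the ideal, while its corner entry is congruent to
  q (1 - t_(w,0)^(-1)). That entry is not in the ideal: by the independence of the
  generators there is a homomorphism psi from the homology to Z with psi t = 0 but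
  psi t_(w,0) ~= 0, and the sum of the coefficients of the monomials in the kernel of psi
  is a linear functional that vanishes on the ideal but takes the value q on the entry.
\<close>

section \<open>Monomials and Fox calculus\<close>

lemma mono_add: "mono (a + b) = mono a * mono b"
  by (simp add: mono_def mult_single)

lemma mono_zero [simp]: "mono 0 = 1"
  by (simp add: mono_def)

lemma mono_mult_uminus: "mono a * mono (- a :: 'h::ab_group_add) = 1"
  by (simp flip: mono_add)

lemma mono_uminus_cancel: "mono (- a) * (mono (a :: 'h::ab_group_add) * x) = x"
  by (simp add: mult.assoc[symmetric] flip: mono_add)

lemma mono_diff: "mono (a - b) = mono a * mono (- b :: 'h::ab_group_add)"
  by (simp flip: mono_add)

fun abel :: "(gen \<Rightarrow> 'h::ab_group_add) \<Rightarrow> word \<Rightarrow> 'h" where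
  "abel \<phi> [] = 0"
| "abel \<phi> ((g, True) # xs) = \<phi> g + abel \<phi> xs"
| "abel \<phi> ((g, False) # xs) = - \<phi> g + abel \<phi> xs"

lemma abel_append: "abel \<phi> (xs @ ys) = abel \<phi> xs + abel \<phi> ys"
  by (induction \<phi> xs rule: abel.induct) (simp_all add: algebra_simps)

lemma abel_concat_map: "abel \<phi> (concat (map f js)) = (\<Sum>j\<leftarrow>js. abel \<phi> (f j))"
  by (induction js) (simp_all add: abel_append)

lemma word_inv_Nil [simp]: "word_inv [] = []"
  by (simp add: word_inv_def)

lemma word_inv_Cons: "word_inv ((g, b) # xs) = word_inv xs @ [(g, \<not> b)]"
  by (simp add: word_inv_def)

lemma word_inv_append: "word_inv (xs @ ys) = word_inv ys @ word_inv xs"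
  by (simp add: word_inv_def)

lemma abel_word_inv: "abel \<phi> (word_inv xs) = - abel \<phi> xs"
  by (induction \<phi> xs rule: abel.induct) (simp_all add: word_inv_Cons abel_append)

lemma mono_abel_replicate: "mono (abel \<phi> (replicate n (g, True))) = mono (\<phi> g) ^ n"
  by (induction n) (simp_all add: mono_add)

lemma fox_append: "fox \<phi> y (xs @ ys) = fox \<phi> y xs + mono (abel \<phi> xs) * fox \<phi> y ys"
  by (induction \<phi> xs rule: abel.induct) (simp_all add: mono_add mono_diff distrib_left ac_simps)

lemma fox_word_inv: "fox \<phi> y (word_inv xs) = - mono (- abel \<phi> xs) * fox \<phi> y xs"
proof (induction xs)
  case (Cons x xs)
  let ?a = "abel \<phi> [x]" and ?b = "abel \<phi> xs"
  have letter: "fox \<phi> y (word_inv [x]) = - mono (- ?a) * fox \<phi> y [x]"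
    by (cases x; cases "snd x") (auto simp: word_inv_def simp flip: mono_add)
  have "fox \<phi> y (word_inv (x # xs))
      = - mono (- ?b) * fox \<phi> y xs - mono (- ?b) * (mono (- ?a) * fox \<phi> y [x])"
    using word_inv_append[of "[x]" xs] by (simp add: fox_append abel_word_inv Cons.IH letter)
  also have "\<dots> = - (mono (- ?a) * mono (- ?b)) * (fox \<phi> y [x] + mono ?a * fox \<phi> y xs)"
    by (simp add: algebra_simps mono_mult_uminus)
  also have "\<dots> = - mono (- abel \<phi> (x # xs)) * fox \<phi> y (x # xs)"
    using abel_append[of \<phi> "[x]" xs] fox_append[of \<phi> y "[x]" xs] by (simp add: mono_diff)
  finally show ?case .
qed simp

lemma fox_append_word_inv:
  "fox \<phi> y (xs @ word_inv ys) = fox \<phi> y xs - mono (abel \<phi> xs - abel \<phi> ys) * fox \<phi> y ys"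
  by (simp add: fox_append fox_word_inv mono_diff)

lemma fox_append_word_inv_cancel: "fox \<phi> y (xs @ word_inv r @ r) = fox \<phi> y xs"
  by (simp add: fox_append fox_word_inv abel_word_inv mono_uminus_cancel algebra_simps)

lemma fox_eq_0_if_notin: "y \<notin> fst ` set xs \<Longrightarrow> fox \<phi> y xs = 0"
  by (induction \<phi> xs rule: abel.induct) auto

section \<open>Congruences modulo a principal ideal\<close>

lemma dvd_prod_diff:
  fixes g :: "'a::comm_ring_1"
  assumes "finite S" "\<And>i. i \<in> S \<Longrightarrow> g dvd f i - h i"
  shows "g dvd prod f S - prod h S"
  using assms
proof (induction S rule: finite_induct)
  case (insert a S)
  have "prod f (insert a S) - prod h (insert a S) = (f a - h a) * prod f S + h a * (prod f S - prod h S)"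
    using insert by (simp add: algebra_simps)
  then show ?case
    using insert by (simp add: dvd_add dvd_mult dvd_mult2)
qed simp

lemma det_dvd_diff:
  fixes g :: "'a::comm_ring_1"
  assumes A: "A \<in> carrier_mat r r" and B: "B \<in> carrier_mat r r"
    and entries: "\<And>i j. i < r \<Longrightarrow> j < r \<Longrightarrow> g dvd A $$ (i, j) - B $$ (i, j)"
  shows "g dvd det A - det B"
proof -
  have "det A - det B = (\<Sum>p\<in>{p. p permutes {0..<r}}. signof p *
          ((\<Prod>i = 0..<r. A $$ (i, p i)) - (\<Prod>i = 0..<r. B $$ (i, p i))))"
    by (simp add: det_def'[OF A] det_def'[OF B] sum_subtractf algebra_simps)
  also have "g dvd \<dots>"
  proof (intro dvd_sum dvd_mult)
    fix p assume "p \<in> {p. p permutes {0..<r}}"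
    then have "\<And>i. i < r \<Longrightarrow> p i < r"
      using permutes_in_image by fastforce
    then show "g dvd (\<Prod>i = 0..<r. A $$ (i, p i)) - (\<Prod>i = 0..<r. B $$ (i, p i))"
      by (intro dvd_prod_diff) (auto intro: entries)
  qed
  finally show ?thesis .
qed

lemma det_outer_product:
  fixes \<alpha> \<beta> :: "nat \<Rightarrow> 'a::comm_ring_1"
  assumes "2 \<le> r"
  shows "det (mat r r (\<lambda>(i, j). \<alpha> i * \<beta> j)) = 0"
proof -
  have "mat r r (\<lambda>(i, j). \<alpha> i * \<beta> j) = mat\<^sub>r r r (\<lambda>i. \<alpha> i \<cdot>\<^sub>v vec r \<beta>)"
    by (rule eq_matI) auto
  moreover have "det (mat\<^sub>r r r (\<lambda>i. vec r \<beta>)) = 0"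
    by (rule det_identical_rows[of _ r 0 1]) (use assms in auto)
  ultimately show ?thesis
    by (simp add: det_rows_mul)
qed

lemma submatrix_carrier:
  assumes "I \<subseteq> {..<dim_row A}" "J \<subseteq> {..<dim_col A}"
  shows "submatrix A I J \<in> carrier_mat (card I) (card J)"
proof -
  have "{i. i < dim_row A \<and> i \<in> I} = I" "{j. j < dim_col A \<and> j \<in> J} = J"
    using assms by auto
  then show ?thesis
    by (simp only: carrier_mat_def mem_Collect_eq dim_submatrix)
qed

lemma submatrix_index_subset:
  assumes "I \<subseteq> {..<dim_row A}" "J \<subseteq> {..<dim_col A}" "a < card I" "b < card J"
  shows "submatrix A I J $$ (a, b) = A $$ (pick I a, pick J b)"
proof -
  have "{i. i < dim_row A \<and> i \<in> I} = I" "{j. j < dim_col A \<and> j \<in> J} = J"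
    using assms by auto
  then show ?thesis
    by (intro submatrix_index) (simp_all only: assms)
qed

lemma det_submatrix_dvd_of_outer_product:
  fixes g :: "'a::comm_ring_1"
  assumes entries: "\<And>i j. i < dim_row A \<Longrightarrow> j < dim_col A \<Longrightarrow> g dvd A $$ (i, j) - \<alpha> i * \<beta> j"
    and I: "I \<subseteq> {..<dim_row A}" and J: "J \<subseteq> {..<dim_col A}"
    and card: "card I = r" "card J = r" "2 \<le> r"
  shows "g dvd det (submatrix A I J)"
proof -
  define B where "B = mat r r (\<lambda>(a, b). \<alpha> (pick I a) * \<beta> (pick J b))"
  have "g dvd det (submatrix A I J) - det B"
  proof (rule det_dvd_diff)
    show "submatrix A I J \<in> carrier_mat r r"
      using submatrix_carrier[OF I J] card by simp
    show "B \<in> carrier_mat r r"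
      by (simp add: B_def)
    fix a b assume "a < r" "b < r"
    moreover have "pick I a \<in> I" "pick J b \<in> J"
      using \<open>a < r\<close> \<open>b < r\<close> card by (simp_all add: pick_in_set)
    ultimately show "g dvd submatrix A I J $$ (a, b) - B $$ (a, b)"
      using I J card by (auto simp: B_def submatrix_index_subset intro!: entries)
  qed
  moreover have "det B = 0"
    unfolding B_def using card(3) by (rule det_outer_product)
  ultimately show ?thesis
    by simp
qed

lemma rank_mod_principal_eq_1:
  fixes A :: "'a::comm_ring_1 mat"
  assumes entries: "\<And>i j. i < dim_row A \<Longrightarrow> j < dim_col A \<Longrightarrow> g dvd A $$ (i, j) - \<alpha> i * \<beta> j"
    and i0: "i0 < dim_row A" and j0: "j0 < dim_col A" and nonzero: "\<not> g dvd \<alpha> i0 * \<beta> j0"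
  shows "rank_mod {x * g | x. True} A = 1"
proof -
  have ideal: "a \<in> {x * g | x. True} \<longleftrightarrow> g dvd a" for a
    by (auto simp: dvd_def mult.commute)
  define R where "R = {r. \<exists>I J. I \<subseteq> {..<dim_row A} \<and> J \<subseteq> {..<dim_col A} \<and>
        card I = r \<and> card J = r \<and> det (submatrix A I J) \<notin> {x * g | x. True}}"
  have pick_singleton: "pick {i} 0 = i" for i
    unfolding pick.simps by (rule Least_equality) auto
  have "det (submatrix A {i0} {j0}) = A $$ (i0, j0)"
    using i0 j0 submatrix_carrier[of "{i0}" A "{j0}"] submatrix_index_subset[of "{i0}" A "{j0}" 0 0] pick_singleton
    by (simp add: det_single)
  moreover have "\<not> g dvd A $$ (i0, j0)"
  proof
    assume "g dvd A $$ (i0, j0)"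
    then have "g dvd A $$ (i0, j0) - (A $$ (i0, j0) - \<alpha> i0 * \<beta> j0)"
      using entries[OF i0 j0] by (rule dvd_diff)
    with nonzero show False
      by simp
  qed
  ultimately have "1 \<in> R"
    unfolding R_def ideal using i0 j0 by (intro CollectI exI[of _ "{i0}"] exI[of _ "{j0}"]) simp
  moreover have "r \<le> 1" if "r \<in> R" for r
  proof (rule ccontr)
    assume "\<not> r \<le> 1"
    moreover obtain I J where "I \<subseteq> {..<dim_row A}" "J \<subseteq> {..<dim_col A}" "card I = r" "card J = r"
      "\<not> g dvd det (submatrix A I J)"
      using \<open>r \<in> R\<close> unfolding R_def ideal by blast
    ultimately show False
      using det_submatrix_dvd_of_outer_product[OF entries] by simp
  qed
  ultimately have "Max R = 1"
    by (intro Max_eqI) (auto intro: finite_subset[of _ "{..1}"])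
  then show ?thesis
    by (simp add: rank_mod_def R_def)
qed

lemma dvd_diff_prod_of_recurrence:
  fixes V c :: "nat \<Rightarrow> 'a::comm_ring_1"
  assumes "\<And>m. m < i \<Longrightarrow> g dvd V (Suc m) - c m * V m"
  shows "g dvd V i - (\<Prod>m<i. c m) * V 0"
  using assms
proof (induction i)
  case (Suc i)
  then have "g dvd (V (Suc i) - c i * V i) + c i * (V i - (\<Prod>m<i. c m) * V 0)"
    by (simp add: dvd_add dvd_mult)
  also have "\<dots> = V (Suc i) - (\<Prod>m<Suc i. c m) * V 0"
    by (simp add: algebra_simps)
  finally show ?case .
qed simp

lemma one_minus_dvd_sum_powers_diff:
  fixes x :: "'a::comm_ring_1"
  shows "(1 - x) dvd (\<Sum>m<n. x ^ m) - of_nat n"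
proof -
  have "(1 - x) dvd 1 - x ^ m" for m
    unfolding one_diff_power_eq by simp
  then have "(1 - x) dvd (\<Sum>m<n. x ^ m - 1)"
    by (metis dvd_minus_iff minus_diff_eq dvd_sum)
  then show ?thesis
    by (simp add: sum_subtractf)
qed

section \<open>Coefficient sums over the kernel of a homomorphism\<close>

definition kernel_coeff_sum :: "('h \<Rightarrow> 'b::zero) \<Rightarrow> ('h \<Rightarrow>\<^sub>0 complex) \<Rightarrow> complex" where
  "kernel_coeff_sum \<psi> f = Sum_any (\<lambda>h. Poly_Mapping.lookup f h when \<psi> h = 0)"

lemma kernel_coeff_sum_superset:
  assumes "finite S" "Poly_Mapping.keys f \<subseteq> S"
  shows "kernel_coeff_sum \<psi> f = (\<Sum>h\<in>S. Poly_Mapping.lookup f h when \<psi> h = 0)"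
  unfolding kernel_coeff_sum_def
  by (rule Sum_any.expand_superset) (use assms in \<open>auto simp: in_keys_iff\<close>)

lemma kernel_coeff_sum_diff:
  "kernel_coeff_sum \<psi> (f - g) = kernel_coeff_sum \<psi> f - kernel_coeff_sum \<psi> g"
proof -
  let ?S = "Poly_Mapping.keys f \<union> Poly_Mapping.keys g"
  have "Poly_Mapping.keys (f - g) \<subseteq> ?S"
    by (auto simp: in_keys_iff lookup_minus)
  then have "kernel_coeff_sum \<psi> (f - g) = (\<Sum>h\<in>?S. Poly_Mapping.lookup (f - g) h when \<psi> h = 0)"
    by (intro kernel_coeff_sum_superset) auto
  also have "\<dots> = (\<Sum>h\<in>?S. Poly_Mapping.lookup f h when \<psi> h = 0)
      - (\<Sum>h\<in>?S. Poly_Mapping.lookup g h when \<psi> h = 0)"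
    by (subst sum_subtractf[symmetric]) (rule sum.cong; auto simp: when_def lookup_minus)
  also have "\<dots> = kernel_coeff_sum \<psi> f - kernel_coeff_sum \<psi> g"
    by (subst (1 2) kernel_coeff_sum_superset[of ?S]) auto
  finally show ?thesis .
qed

lemma kernel_coeff_sum_single:
  "kernel_coeff_sum \<psi> (Poly_Mapping.single h c) = (c when \<psi> h = 0)"
  by (simp add: kernel_coeff_sum_superset[of "{h}"] lookup_single)

lemma lookup_mult_mono:
  "Poly_Mapping.lookup (f * mono a) h = Poly_Mapping.lookup f (h - a :: 'h::ab_group_add)"
proof -
  have "(\<Sum>b. (1::complex) when a = b \<and> h = l + b) = (1 when h = l + a)" for l
  proof -
    have "(\<Sum>b. (1::complex) when a = b \<and> h = l + b) = (\<Sum>b. (1 when h = l + b) when a = b)"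
      by (simp add: when_when conj_commute)
    then show ?thesis
      by simp
  qed
  then have "Poly_Mapping.lookup (f * mono a) h = (\<Sum>l. Poly_Mapping.lookup f l * (1 when h = l + a))"
    by (simp add: mono_def lookup_mult lookup_single when_when)
  also have "\<dots> = (\<Sum>l. Poly_Mapping.lookup f l when l = h - a)"
    by (rule Sum_any.cong) (auto simp: when_def)
  finally show ?thesis
    by simp
qed

lemma kernel_coeff_sum_mult_mono:
  assumes "additive \<psi>" "\<psi> a = 0"
  shows "kernel_coeff_sum \<psi> (f * mono a) = kernel_coeff_sum \<psi> f"
proof -
  have keys: "Poly_Mapping.keys (f * mono a) \<subseteq> (\<lambda>h. h + a) ` Poly_Mapping.keys f"
  proof
    fix h assume "h \<in> Poly_Mapping.keys (f * mono a)"
    then have "h - a \<in> Poly_Mapping.keys f"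
      by (simp add: in_keys_iff lookup_mult_mono)
    then show "h \<in> (\<lambda>h. h + a) ` Poly_Mapping.keys f"
      by (intro image_eqI[of _ _ "h - a"]) auto
  qed
  have "kernel_coeff_sum \<psi> (f * mono a)
      = (\<Sum>h\<in>(\<lambda>h. h + a) ` Poly_Mapping.keys f. Poly_Mapping.lookup (f * mono a) h when \<psi> h = 0)"
    by (rule kernel_coeff_sum_superset) (use keys in auto)
  also have "\<dots> = (\<Sum>h\<in>Poly_Mapping.keys f. Poly_Mapping.lookup f h when \<psi> (h + a) = 0)"
    by (subst sum.reindex) (auto simp: inj_on_def lookup_mult_mono)
  also have "\<dots> = kernel_coeff_sum \<psi> f"
    using assms by (simp add: kernel_coeff_sum_superset[of "Poly_Mapping.keys f"] additive.add)
  finally show ?thesis .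
qed

lemma kernel_coeff_sum_one_minus_mono_mult:
  assumes "additive \<psi>" "\<psi> a = 0"
  shows "kernel_coeff_sum \<psi> ((1 - mono a) * f) = 0"
proof -
  have "(1 - mono a) * f = f - f * mono a"
    by (simp add: algebra_simps)
  then show ?thesis
    using assms by (simp add: kernel_coeff_sum_diff kernel_coeff_sum_mult_mono)
qed

lemma kernel_coeff_sum_of_nat_mult_one_minus_mono:
  assumes "additive \<psi>" "\<psi> b \<noteq> 0"
  shows "kernel_coeff_sum \<psi> (of_nat n * (1 - mono b)) = of_nat n"
proof -
  have "of_nat n * (1 - mono b) = Poly_Mapping.single 0 (of_nat n) - Poly_Mapping.single b (of_nat n)"
    by (simp add: mono_def right_diff_distrib mult_single del: single_of_nat flip: single_of_nat)
  then show ?thesis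
    using assms additive.zero[OF assms(1)]
    by (simp only: kernel_coeff_sum_diff kernel_coeff_sum_single) simp
qed

lemma not_dvd_one_minus_mono:
  fixes a b :: "'h::ab_group_add"
  assumes \<psi>: "additive \<psi>" "\<psi> a = 0" "\<psi> b \<noteq> 0" and "0 < n"
  shows "\<not> (1 - mono a) dvd (1 - mono b) * (\<Sum>m<n. mono a ^ m)"
proof
  assume "(1 - mono a) dvd (1 - mono b) * (\<Sum>m<n. mono a ^ m)"
  moreover have "(1 - mono a) dvd (1 - mono b) * ((\<Sum>m<n. mono a ^ m) - of_nat n)"
    by (intro dvd_mult one_minus_dvd_sum_powers_diff)
  ultimately have "(1 - mono a) dvd
      (1 - mono b) * (\<Sum>m<n. mono a ^ m) - (1 - mono b) * ((\<Sum>m<n. mono a ^ m) - of_nat n)"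
    by (rule dvd_diff)
  then obtain f where "of_nat n * (1 - mono b) = (1 - mono a) * f"
    by (auto simp: right_diff_distrib mult.commute elim: dvdE)
  then have "kernel_coeff_sum \<psi> (of_nat n * (1 - mono b)) = 0"
    using \<psi> by (simp add: kernel_coeff_sum_one_minus_mono_mult)
  with \<psi> \<open>0 < n\<close> show False
    by (simp add: kernel_coeff_sum_of_nat_mult_one_minus_mono)
qed

lemma independent_pair_separating_functional:
  fixes a b :: "'n \<Rightarrow> int"
  assumes indep: "\<And>x y. (\<lambda>i. x * a i + y * b i) = 0 \<Longrightarrow> x = 0 \<and> y = 0"
  obtains \<psi> :: "('n \<Rightarrow> int) \<Rightarrow> int" where "additive \<psi>" "\<psi> a = 0" "\<psi> b \<noteq> 0"
proof -
  have "\<exists>p q. a q * b p - a p * b q \<noteq> 0"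
  proof (rule ccontr)
    assume "\<not> ?thesis"
    then have minors: "b p * a q + (- a p) * b q = 0" for p q
      by (auto simp: algebra_simps)
    show False
    proof (cases "a = 0")
      case True
      then have "(\<lambda>i. 1 * a i + 0 * b i) = 0"
        by (simp add: fun_eq_iff)
      from indep[OF this] show False
        by simp
    next
      case False
      then obtain p where "a p \<noteq> 0"
        by (auto simp: fun_eq_iff)
      have "(\<lambda>i. b p * a i + (- a p) * b i) = 0"
        using minors[of p] by (simp add: fun_eq_iff)
      from indep[OF this] \<open>a p \<noteq> 0\<close> show False
        by simp
    qed
  qed
  then obtain p q where pq: "a q * b p - a p * b q \<noteq> 0"
    by blast
  show thesis
  proof
    show "additive (\<lambda>h. a q * h p - a p * h q)"
      by unfold_locales (simp add: algebra_simps)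
  qed (use pq in simp_all)
qed

lemma sum_fun_apply: "(\<Sum>s\<in>S. f s) x = (\<Sum>s\<in>S. f s x)"
  by (induction S rule: infinite_finite_induct) auto

lemma generators_separating_functional:
  fixes tu :: "'n \<Rightarrow> int" and tw :: "nat \<Rightarrow> 'n \<Rightarrow> int"
  assumes "0 < k"
    and indep: "\<And>c a. (\<lambda>x. c * tu x + (\<Sum>s<k. a s * tw s x)) = 0 \<Longrightarrow> c = 0 \<and> (\<forall>s<k. a s = 0)"
  obtains \<psi> :: "('n \<Rightarrow> int) \<Rightarrow> int"
  where "additive \<psi>" "\<psi> (tu + (\<Sum>s<k. tw s)) = 0" "\<psi> (- tw 0) \<noteq> 0"
proof (rule independent_pair_separating_functional)
  fix a b
  assume zero: "(\<lambda>x. a * (tu + (\<Sum>s<k. tw s)) x + b * (- tw 0) x) = 0"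
  have coeffs: "(\<Sum>s<k. (a - (if s = 0 then b else 0)) * tw s x) = a * (\<Sum>s<k. tw s x) - b * tw 0 x" for x
  proof -
    have "(\<Sum>s<k. (a - (if s = 0 then b else 0)) * tw s x)
        = (\<Sum>s<k. a * tw s x - (if s = 0 then b * tw s x else 0))"
      by (rule sum.cong) (auto simp: left_diff_distrib)
    also have "\<dots> = a * (\<Sum>s<k. tw s x) - b * tw 0 x"
      using \<open>0 < k\<close> by (simp add: sum_subtractf sum_distrib_left)
    finally show ?thesis .
  qed
  have "(\<lambda>x. a * tu x + (\<Sum>s<k. (a - (if s = 0 then b else 0)) * tw s x))
      = (\<lambda>x. a * (tu + (\<Sum>s<k. tw s)) x + b * (- tw 0) x)"
    unfolding coeffs by (simp add: fun_eq_iff sum_fun_apply algebra_simps)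
  with zero have "(\<lambda>x. a * tu x + (\<Sum>s<k. (a - (if s = 0 then b else 0)) * tw s x)) = 0"
    by simp
  from indep[OF this] \<open>0 < k\<close> show "a = 0 \<and> b = 0"
    by auto
qed (rule that)

section \<open>The relations (RB)\<close>

definition RB_lhs :: "nat \<Rightarrow> nat \<Rightarrow> nat \<Rightarrow> word" where
  "RB_lhs k l i = concat (map (Wletter k) [i..<i + l])"

lemma RB_word_eq: "RB_word k l i = RB_lhs k l i @ word_inv (RB_lhs k l (Suc i))"
  by (simp add: RB_word_def RB_lhs_def)

lemma RB_lhs_add: "RB_lhs k (l + m) i = RB_lhs k l i @ RB_lhs k m (i + l)"
proof -
  have "[i..<i + (l + m)] = [i..<i + l] @ [i + l..<i + l + m]"
    by (metis add.assoc le_add1 upt_add_eq_append)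
  then show ?thesis
    by (simp add: RB_lhs_def)
qed

lemma RB_lhs_0 [simp]: "RB_lhs k 0 i = []"
  by (simp add: RB_lhs_def)

lemma RB_lhs_one [simp]: "RB_lhs k (Suc 0) i = Wletter k i"
  by (simp add: RB_lhs_def)

lemma RB_lhs_Wletter: "RB_lhs k l i @ Wletter k (i + l) = Wletter k i @ RB_lhs k l (Suc i)"
  using RB_lhs_add[of k l 1 i] RB_lhs_add[of k 1 l i] by (simp add: add.commute)

lemma Wletter_add_mult:
  assumes "s < k"
  shows "Wletter k (s + q * k) = replicate q (UBar, True) @ [(WGen s, True)] @ word_inv (replicate q (UBar, True))"
proof -
  have "(s + q * k) div k = q" "(s + q * k) mod k = s"
    using assms by simp_all
  then show ?thesis
    by (simp add: Wletter_def word_inv_def)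
qed

lemma abel_Wletter: "abel \<phi> (Wletter k j) = \<phi> (WGen (j mod k))"
proof -
  have "abel \<phi> (replicate q (UBar, False)) = - abel \<phi> (replicate q (UBar, True))" for q
    by (induction q) (simp_all add: algebra_simps)
  then show ?thesis
    by (simp add: Wletter_def abel_append)
qed

lemma abel_RB_lhs_Suc:
  assumes "k dvd l"
  shows "abel \<phi> (RB_lhs k l (Suc i)) = abel \<phi> (RB_lhs k l i)"
proof -
  have "(i + l) mod k = i mod k"
    using assms by (auto elim!: dvdE)
  then show ?thesis
    using arg_cong[OF RB_lhs_Wletter[of k l i], of "abel \<phi>"]
    by (simp add: abel_append abel_Wletter add.commute)
qed

lemma abel_RB_lhs: "k dvd l \<Longrightarrow> abel \<phi> (RB_lhs k l i) = abel \<phi> (RB_lhs k l 0)"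
  by (induction i) (simp_all add: abel_RB_lhs_Suc)

lemma abel_RB_lhs_period: "abel \<phi> (RB_lhs k k i) = (\<Sum>s<k. \<phi> (WGen s))"
proof -
  have "abel \<phi> (RB_lhs k k 0) = (\<Sum>j<k. \<phi> (WGen (j mod k)))"
    by (simp add: RB_lhs_def abel_concat_map abel_Wletter interv_sum_list_conv_sum_set_nat
        atLeast0LessThan)
  also have "\<dots> = (\<Sum>s<k. \<phi> (WGen s))"
    by (rule sum.cong) auto
  finally show ?thesis
    using abel_RB_lhs[of k k \<phi> i] by simp
qed

lemma mono_abel_RB_lhs: "mono (abel \<phi> (RB_lhs k (q * k) i)) = mono (\<Sum>s<k. \<phi> (WGen s)) ^ q"
proof -
  have "mono (abel \<phi> (RB_lhs k (q * k) 0)) = mono (\<Sum>s<k. \<phi> (WGen s)) ^ q"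
  proof (induction q)
    case (Suc q)
    then show ?case
      using RB_lhs_add[of k "q * k" k 0]
      by (simp add: abel_append abel_RB_lhs_period mono_add add.commute)
  qed simp
  then show ?thesis
    using abel_RB_lhs[of k "q * k" \<phi> i] by simp
qed

lemma mono_abel_RB_lhs_ubar:
  "mono (abel \<phi> (RB_lhs k (q * k) i @ replicate q (UBar, True)))
    = mono (\<phi> UBar + (\<Sum>s<k. \<phi> (WGen s))) ^ q"
  unfolding abel_append mono_add mono_abel_RB_lhs mono_abel_replicate
  by (simp add: power_mult_distrib mult.commute)

lemma fox_RB_word:
  assumes "k dvd l"
  shows "fox \<phi> y (RB_word k l i) = fox \<phi> y (RB_lhs k l i @ r) - fox \<phi> y (RB_lhs k l (Suc i) @ r)"
  using abel_RB_lhs_Suc[OF assms, of \<phi> i]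
  unfolding RB_word_eq fox_append_word_inv by (simp add: fox_append)

lemma fox_RB_lhs_ubar_step:
  fixes k q s :: nat
  assumes "s < k"
  defines "B \<equiv> \<lambda>i. RB_lhs k (q * k) i @ replicate q (UBar, True)"
  shows "mono (\<phi> (WGen s)) * fox \<phi> y (B (Suc s))
    = fox \<phi> y (B s) - (1 - mono (abel \<phi> (B s))) * (if WGen s = y then 1 else 0)"
proof -
  let ?u = "replicate q (UBar, True)"
  have "B s @ [(WGen s, True)] @ word_inv ?u @ ?u = Wletter k s @ B (Suc s)"
    using RB_lhs_Wletter[of k "q * k" s] Wletter_add_mult[OF assms(1), of q]
    by (simp add: B_def add.commute)
  then have "fox \<phi> y (B s @ [(WGen s, True)]) = fox \<phi> y (Wletter k s @ B (Suc s))"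
    by (metis append.assoc fox_append_word_inv_cancel)
  moreover have "Wletter k s = [(WGen s, True)]"
    using Wletter_add_mult[OF assms(1), of 0] by simp
  ultimately show ?thesis
    by (simp add: fox_append algebra_simps)
qed

lemma fox_RB_word_cong:
  fixes \<phi> :: "gen \<Rightarrow> 'h::ab_group_add" and k q i :: nat
  assumes "i < k"
  defines "T \<equiv> \<phi> UBar + (\<Sum>s<k. \<phi> (WGen s))"
    and "c \<equiv> \<lambda>s. mono (- \<phi> (WGen s))"
    and "B \<equiv> \<lambda>i. RB_lhs k (q * k) i @ replicate q (UBar, True)"
  shows "(1 - mono T) dvd fox \<phi> y (RB_word k (q * k) i) - (1 - c i) * (\<Prod>m<i. c m) * fox \<phi> y (B 0)"
proof -
  define V where "V i = fox \<phi> y (B i)" for i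
  have "(1 - mono T) dvd 1 - mono T ^ q"
    unfolding one_diff_power_eq by simp
  have step: "(1 - mono T) dvd V (Suc s) - c s * V s" if "s < k" for s
  proof -
    define D :: "'h \<Rightarrow>\<^sub>0 complex" where "D = (if WGen s = y then 1 else 0)"
    have shift: "mono (\<phi> (WGen s)) * V (Suc s) = V s - (1 - mono T ^ q) * D"
      using fox_RB_lhs_ubar_step[OF that, where q = q and \<phi> = \<phi> and y = y]
      unfolding mono_abel_RB_lhs_ubar by (simp only: V_def B_def T_def D_def)
    have "V (Suc s) - c s * V s = c s * (mono (\<phi> (WGen s)) * V (Suc s)) - c s * V s"
      by (simp add: c_def mono_uminus_cancel)
    also have "\<dots> = - (c s * D * (1 - mono T ^ q))"
      unfolding shift by (simp add: algebra_simps)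
    finally show ?thesis
      using \<open>(1 - mono T) dvd 1 - mono T ^ q\<close> by simp
  qed
  have "fox \<phi> y (RB_word k (q * k) i) - (1 - c i) * (\<Prod>m<i. c m) * V 0
      = (1 - c i) * (V i - (\<Prod>m<i. c m) * V 0) - (V (Suc i) - c i * V i)"
    using fox_RB_word[of k "q * k" \<phi> y i] by (simp add: V_def B_def algebra_simps)
  moreover have "(1 - mono T) dvd V i - (\<Prod>m<i. c m) * V 0"
    using assms(1) by (intro dvd_diff_prod_of_recurrence step) simp
  ultimately show ?thesis
    using step[OF assms(1)] by (simp add: V_def dvd_diff dvd_mult)
qed

lemma WGen_0_notin_RB_lhs: "WGen 0 \<notin> fst ` set (RB_lhs k (k - 1) (Suc (q * k)))"
proof
  assume "WGen 0 \<in> fst ` set (RB_lhs k (k - 1) (Suc (q * k)))"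
  then obtain j b where "j \<in> {Suc (q * k)..<Suc (q * k) + (k - 1)}" "(WGen 0, b) \<in> set (Wletter k j)"
    unfolding RB_lhs_def set_concat set_map set_upt by fastforce
  then have j: "q * k < j" "j < q * k + k" and "(WGen 0, b) \<in> set (Wletter k j)"
    by auto
  then have "j mod k = 0"
    by (auto simp: Wletter_def)
  moreover have "j mod k = (j - q * k + q * k) mod k"
    using j by simp
  then have "j mod k = j - q * k"
    using j by (simp only: mod_mult_self1) simp
  ultimately show False
    using j by simp
qed

lemma fox_WGen_0_RB_lhs_ubar:
  assumes "0 < k"
  shows "fox \<phi> (WGen 0) (RB_lhs k (q * k) 0 @ replicate q (UBar, True))
    = (\<Sum>m<q. mono (\<phi> UBar + (\<Sum>s<k. \<phi> (WGen s))) ^ m)"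
proof -
  have ubar: "fox \<phi> (WGen 0) (replicate p (UBar, True)) = 0" for p
    by (rule fox_eq_0_if_notin) auto
  have period: "fox \<phi> (WGen 0) (RB_lhs k k (p * k)) = mono (\<phi> UBar) ^ p" for p
  proof -
    have "RB_lhs k k (p * k) = Wletter k (0 + p * k) @ RB_lhs k (k - 1) (Suc (p * k))"
      using RB_lhs_add[of k 1 "k - 1" "p * k"] assms by simp
    moreover have "fox \<phi> (WGen 0) (RB_lhs k (k - 1) (Suc (p * k))) = 0"
      by (rule fox_eq_0_if_notin[OF WGen_0_notin_RB_lhs])
    ultimately show ?thesis
      using Wletter_add_mult[OF assms, of p]
      by (simp add: fox_append fox_word_inv ubar mono_abel_replicate)
  qed
  have "fox \<phi> (WGen 0) (RB_lhs k (q * k) 0) = (\<Sum>m<q. mono (\<phi> UBar + (\<Sum>s<k. \<phi> (WGen s))) ^ m)"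
  proof (induction q)
    case (Suc q)
    then show ?case
      using RB_lhs_add[of k "q * k" k 0]
      by (simp add: fox_append period mono_abel_RB_lhs mono_add power_mult_distrib add.commute)
  qed simp
  then show ?thesis
    by (simp add: fox_append ubar)
qed

lemma not_dvd_fox_WGen_0_RB_lhs_ubar:
  fixes \<phi> :: "gen \<Rightarrow> 'h::ab_group_add" and k q :: nat
  defines "T \<equiv> \<phi> UBar + (\<Sum>s<k. \<phi> (WGen s))"
  assumes "0 < k" "0 < q" "additive \<psi>" "\<psi> T = 0" "\<psi> (- \<phi> (WGen 0)) \<noteq> 0"
  shows "\<not> (1 - mono T) dvd
    (1 - mono (- \<phi> (WGen 0))) * fox \<phi> (WGen 0) (RB_lhs k (q * k) 0 @ replicate q (UBar, True))"
  using not_dvd_one_minus_mono[of \<psi> T "- \<phi> (WGen 0)" q] assms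
  by (simp add: fox_WGen_0_RB_lhs_ubar)

theorem lemma2p12:
  fixes k l :: nat
    and tu :: "'n::finite \<Rightarrow> int"
    and tw :: "nat \<Rightarrow> ('n \<Rightarrow> int)"
  assumes k: "k \<ge> 2"
    and l: "l \<ge> 2"
    and kl: "k dvd l"
    and indep: "\<And>c a. (\<lambda>x. c * tu x + (\<Sum>s<k. a s * tw s x)) = 0
                   \<Longrightarrow> c = 0 \<and> (\<forall>s<k. a s = 0)"
  shows "rank_mod
           {x * (1 - mono (tu + (\<Sum>s<k. tw s))) | x. True}
           (fox_matrix_RB (\<lambda>g. case g of UBar \<Rightarrow> tu | WGen s \<Rightarrow> tw s) k l) = 1"
proof -
  define \<phi> :: "gen \<Rightarrow> 'n \<Rightarrow> int" where "\<phi> = (\<lambda>g. case g of UBar \<Rightarrow> tu | WGen s \<Rightarrow> tw s)"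
  define T where "T = tu + (\<Sum>s<k. tw s)"
  have \<phi>_WGen: "\<phi> (WGen s) = tw s" for s
    by (simp add: \<phi>_def)
  have T: "\<phi> UBar + (\<Sum>s<k. \<phi> (WGen s)) = T"
    by (simp add: \<phi>_def T_def)
  obtain q where l_eq: "l = q * k"
    using kl by (metis dvdE mult.commute)
  with l have "0 < q"
    by (cases q) auto
  obtain \<psi> :: "('n \<Rightarrow> int) \<Rightarrow> int" where \<psi>: "additive \<psi>" "\<psi> T = 0" "\<psi> (- tw 0) \<noteq> 0"
    unfolding T_def
    by (rule generators_separating_functional[where tu = tu and tw = tw and k = k]) (use k indep in auto)
  let ?c = "\<lambda>s. mono (- \<phi> (WGen s))"
  let ?\<beta> = "\<lambda>j. fox \<phi> (if j < k then WGen j else UBar)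
    (RB_lhs k (q * k) 0 @ replicate q (UBar, True))"
  have "rank_mod {x * (1 - mono T) | x. True} (fox_matrix_RB \<phi> k l) = 1"
  proof (rule rank_mod_principal_eq_1)
    fix i j
    assume "i < dim_row (fox_matrix_RB \<phi> k l)" "j < dim_col (fox_matrix_RB \<phi> k l)"
    then show "(1 - mono T) dvd fox_matrix_RB \<phi> k l $$ (i, j) - ((1 - ?c i) * (\<Prod>m<i. ?c m)) * ?\<beta> j"
      using fox_RB_word_cong[where \<phi> = \<phi> and q = q and i = i and k = k]
      by (simp add: fox_matrix_RB_def l_eq T)
  next
    show "\<not> (1 - mono T) dvd ((1 - ?c 0) * (\<Prod>m<0. ?c m)) * ?\<beta> 0"
      using not_dvd_fox_WGen_0_RB_lhs_ubar[where \<phi> = \<phi> and q = q and k = k and \<psi> = \<psi>] k \<open>0 < q\<close> \<psi>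
      unfolding T by (simp add: \<phi>_WGen)
  qed (use k in \<open>simp_all add: fox_matrix_RB_def\<close>)
  then show ?thesis
    unfolding \<phi>_def T_def .
qed

end
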